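(* For $n\ge1$ and $0\le k\le n$, \[ B^{\mathrm{fmaj}}_{n,k}(q)=[2n-2k]_q\,B^{\mathrm{fmaj}}_{n-1,k}(q)+[2n-2k+1]_q\,B^{\mathrm{fmaj}}_{n-1,k-1}(q), \] where $B^{\mathrm{fmaj}}_{m,k}(q)=0$ when $k<0$ or $k>m$ (and $B^{\mathrm{fmaj}}_{m,m}(q)=1$).
   Context: $[k]_q=1+q+\dots+q^{k-1}$ for $k\ge1$, $[0]_q=0$. $\mathcal{B}_m$ is the group of signed permutations of $[m]$ (bijections $\pi$ of $\{\pm1,\dots,\pm m\}$ with $\pi(-i)=-\pi(i)$, written $\pi=\pi_1\cdots\pi_m$), integers ordered naturally. Set $\pi_0=0$; $\mathrm{Des}_B(\pi)=\{i\in\{0,\dots,m-1\}:\pi_i>\pi_{i+1}\}$, $\mathrm{neg}(\pi)=|\{i:\pi_i<0\}|$, $\mathrm{fmaj}(\pi)=\sum_{i\in\mathrm{Des}_B(\pi)}2i+\mathrm{neg}(\pi)$. For $0\le k\le m$, $\mathcal{B}^{>}_{m,k}=\{(\pi,S):\pi\in\mathcal{B}_m,\ S\subseteq\mathrm{Des}_B(\pi),\ |S|=k\}$, $\mathrm{fmaj}((\pi,S))=\mathrm{fmaj}(\pi)-\sum_{j\in S}\bigl(2|\mathrm{Des}_B(\pi)\cap\{j,\dots,m-1\}|-1\bigr)$, and $B^{\mathrm{fmaj}}_{m,k}(q)=\sum_{(\pi,S)\in\mathcal{B}^{>}_{m,k}}q^{\mathrm{fmaj}((\pi,S))}$. *)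

theory Defs
  imports "HOL-Computational_Algebra.Polynomial"
begin

definition qint :: "nat \<Rightarrow> int poly" where
  "qint k = (\<Sum>i<k. monom 1 i)"

text \<open>Signed permutations of [m], represented as functions on int which are
  bijections of {-m..m}-{0}, odd (pi(-i) = - pi(i)), and the identity elsewhere
  (in particular pi(0) = 0, matching the convention pi_0 = 0).\<close>
definition signed_perms :: "nat \<Rightarrow> (int \<Rightarrow> int) set" where
  "signed_perms m = {\<pi>. bij_betw \<pi> ({-int m..int m} - {0}) ({-int m..int m} - {0})
      \<and> (\<forall>i \<in> {-int m..int m} - {0}. \<pi> (-i) = - \<pi> i)
      \<and> (\<forall>i. i \<notin> {-int m..int m} - {0} \<longrightarrow> \<pi> i = i)}"

definition desB :: "nat \<Rightarrow> (int \<Rightarrow> int) \<Rightarrow> nat set" where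
  "desB m \<pi> = {i \<in> {0..<m}. \<pi> (int i) > \<pi> (int (i + 1))}"

definition negB :: "nat \<Rightarrow> (int \<Rightarrow> int) \<Rightarrow> nat" where
  "negB m \<pi> = card {i \<in> {1..m}. \<pi> (int i) < 0}"

definition fmajB :: "nat \<Rightarrow> (int \<Rightarrow> int) \<Rightarrow> int" where
  "fmajB m \<pi> = int (\<Sum>i\<in>desB m \<pi>. 2 * i) + int (negB m \<pi>)"

definition Bgt :: "nat \<Rightarrow> nat \<Rightarrow> ((int \<Rightarrow> int) \<times> nat set) set" where
  "Bgt m k = {(\<pi>, S). \<pi> \<in> signed_perms m \<and> S \<subseteq> desB m \<pi> \<and> card S = k}"

definition fmajBS :: "nat \<Rightarrow> (int \<Rightarrow> int) \<times> nat set \<Rightarrow> int" where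
  "fmajBS m p = (case p of (\<pi>, S) \<Rightarrow>
     fmajB m \<pi> - (\<Sum>j\<in>S. 2 * int (card (desB m \<pi> \<inter> {j..m-1})) - 1))"

text \<open>fmaj of a pair is always a nonnegative integer; it is used as an exponent.\<close>
definition Bfmaj :: "nat \<Rightarrow> nat \<Rightarrow> int poly" where
  "Bfmaj m k = (\<Sum>p\<in>Bgt m k. monom 1 (nat (fmajBS m p)))"

end

(*
  Encode a signed permutation by its window [pi 1, ..., pi n]; every window of length n arises
  exactly once by inserting n or -n at one of n positions of a window of length n - 1.

  For a window with r descents, marking the descent that has j descents at or after it lowers
  fmaj by 2j - 1, so the marked pairs contribute q^(fmaj - 2kr) e_k(q, q^3, ..., q^(2r-1)).
  Inserting the largest letter either keeps r (at a descent, or at the end with positive sign)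
  or creates a new descent, and the increase of fmaj is determined by the position. Summed over
  the 2n insertions these increases give the factor [2r+1]_q for the insertions keeping r and
  q^(2r+1) [2n-2r-1]_q for the others, so the recurrence reduces to an identity between
  e_k(q, ..., q^(2r-1)) and e_k(q, ..., q^(2r+1)), which follows from
  (q^(2k) - 1) e_k = (q^(2r+1) - q^(2k-1)) e_(k-1).
*)
theory Submission
  imports Defs
begin

section \<open>Sums and elementary symmetric functions of odd powers\<close>

lemma sum_power_odd_bound:
  fixes x :: "'a::comm_ring_1"
  shows "(\<Sum>i<2 * r + 1. x ^ i) = 1 + (\<Sum>t<r. x ^ (2 * t + 1) + x ^ (2 * t + 2))"
  by (induction r) (simp_all add: algebra_simps)

lemma sum_power_odd_interval:
  fixes x :: "'a::comm_ring_1"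
  assumes "r \<le> m"
  shows "(\<Sum>j\<in>{r..<m}. x ^ (2 * j + 2)) + (\<Sum>j\<in>{r..<Suc m}. x ^ (2 * j + 1))
    = x ^ (2 * r + 1) * (\<Sum>i<2 * m - 2 * r + 1. x ^ i)"
  using assms
proof (induction m rule: dec_induct)
  case base
  then show ?case by simp
next
  case (step m)
  have "2 * Suc m - 2 * r + 1 = Suc (Suc (2 * m - 2 * r + 1))"
    using step.hyps by simp
  moreover have "x ^ (2 * r + 1) * x ^ (2 * m - 2 * r + 1) = x ^ (2 * m + 2)"
    using step.hyps by (simp flip: power_add add: algebra_simps)
  ultimately have "x ^ (2 * r + 1) * (\<Sum>i<2 * Suc m - 2 * r + 1. x ^ i)
      = x ^ (2 * r + 1) * (\<Sum>i<2 * m - 2 * r + 1. x ^ i) + x ^ (2 * m + 2) + x ^ (2 * m + 2) * x"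
    by (simp add: algebra_simps)
  with step show ?case
    by (simp add: sum.atLeastLessThan_Suc algebra_simps)
qed

text \<open>\<^term>\<open>odd_esym x r k\<close> is the elementary symmetric function \<open>e\<^sub>k(x, x\<^sup>3, \<dots>, x\<^bsup>2r-1\<^esup>)\<close>.\<close>
fun odd_esym :: "'a::comm_ring_1 \<Rightarrow> nat \<Rightarrow> nat \<Rightarrow> 'a" where
  "odd_esym x r 0 = 1"
| "odd_esym x 0 (Suc k) = 0"
| "odd_esym x (Suc r) (Suc k) = odd_esym x r (Suc k) + x ^ (2 * r + 1) * odd_esym x r k"

lemma odd_esym_Suc_ratio:
  fixes x :: "'a::comm_ring_1"
  shows "(x ^ (2 * k + 2) - 1) * odd_esym x r (Suc k) = (x ^ (2 * r + 1) - x ^ (2 * k + 1)) * odd_esym x r k"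
proof (induction r arbitrary: k)
  case 0
  then show ?case by (cases k) simp_all
next
  case (Suc r)
  have step: "(x ^ (2 * k + 2) - 1) * odd_esym x (Suc r) (Suc k)
      = (x ^ (2 * r + 1) * x ^ (2 * k + 2) - x ^ (2 * k + 1)) * odd_esym x r k"
    using Suc.IH[of k] by (simp add: algebra_simps)
  show ?case
  proof (cases k)
    case 0
    with step show ?thesis by (simp add: algebra_simps power_add power2_eq_square)
  next
    case (Suc i)
    define y where "y = x ^ (2 * i + 1)"
    define z where "z = x ^ (2 * r + 1)"
    have IH: "(x * y - 1) * odd_esym x r k = (z - y) * odd_esym x r i"
      using Suc.IH[of i] Suc unfolding y_def z_def by (simp add: algebra_simps)
    have "(x ^ (2 * Suc r + 1) - x ^ (2 * k + 1)) * odd_esym x (Suc r) k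
        = x^2 * (z - y) * odd_esym x r k + x^2 * z * ((z - y) * odd_esym x r i)"
      unfolding Suc y_def z_def by (simp add: algebra_simps power_add power2_eq_square)
    also have "\<dots> = (z * x^3 * y - x^2 * y) * odd_esym x r k"
      unfolding IH[symmetric] by (simp add: algebra_simps power2_eq_square power3_eq_cube)
    finally show ?thesis
      using step unfolding Suc y_def z_def by (simp add: algebra_simps power_add power2_eq_square power3_eq_cube)
  qed
qed

lemma odd_esym_insertion_identity_scaled:
  fixes x :: "'a::comm_ring_1"
  assumes "k \<le> Suc m" and "r \<le> m"
  shows "x ^ (2 * k) * (x ^ (2 * r + 1) - 1) * odd_esym x r k
      + x ^ (2 * r + 1) * (x ^ (2 * m - 2 * r + 1) - 1) * odd_esym x (Suc r) k
    = x ^ (2 * k) * (x ^ (2 * m + 2 - 2 * k) - 1) * odd_esym x r k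
      + (if k = 0 then 0 else x ^ (2 * r + 2 * k) * (x ^ (2 * m + 3 - 2 * k) - 1) * odd_esym x r (k - 1))"
    (is "?L = ?R")
proof -
  have shifted: "x ^ (2 * r + 1) * (x ^ (2 * m - 2 * r + 1) - 1) = x ^ (2 * m + 2) - x ^ (2 * r + 1)"
    using assms(2) by (simp add: algebra_simps flip: power_add)
  show ?thesis
  proof (cases k)
    case 0
    then show ?thesis
      using shifted by (simp add: algebra_simps)
  next
    case (Suc j)
    obtain N where N: "m = j + N"
      using assms(1) Suc le_Suc_ex by force
    define a where "a = x ^ (2 * j + 1)"
    define b where "b = x ^ (2 * r + 1)"
    define c where "c = x ^ (2 * N)"
    have ratio: "(a * x - 1) * odd_esym x r k = (b - a) * odd_esym x r j"
      using odd_esym_Suc_ratio[of x j r] Suc unfolding a_def b_def by (simp add: algebra_simps)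
    have sh: "x ^ (2 * r + 1) * (x ^ (2 * m - 2 * r + 1) - 1) = c * a * x - b"
      using shifted unfolding a_def b_def c_def N by (simp add: power_add algebra_simps)
    have xk: "x ^ (2 * k) = a * x" and e1: "x ^ (2 * m + 2 - 2 * k) = c"
      and e2: "x ^ (2 * m + 3 - 2 * k) = c * x" and e3: "x ^ (2 * r + 2 * k) = b * a"
      unfolding a_def b_def c_def N Suc by (simp_all add: power_add)
    have "?L = a * x * (b - 1) * odd_esym x r k + (c * a * x - b) * (odd_esym x r k + b * odd_esym x r j)"
      unfolding xk sh by (simp add: Suc b_def)
    also have "\<dots> = a * x * (c - 1) * odd_esym x r k + b * a * (c * x - 1) * odd_esym x r j
        + b * ((a * x - 1) * odd_esym x r k - (b - a) * odd_esym x r j)"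
      by (simp add: algebra_simps)
    also have "\<dots> = ?R"
      unfolding xk e1 e2 e3 ratio using Suc by simp
    finally show ?thesis .
  qed
qed

lemma odd_esym_insertion_identity:
  fixes x :: "'a::idom"
  assumes "x \<noteq> 1" and "k \<le> Suc m" and "r \<le> m"
  shows "x ^ (2 * k) * (\<Sum>i<2 * r + 1. x ^ i) * odd_esym x r k
      + x ^ (2 * r + 1) * (\<Sum>i<2 * m - 2 * r + 1. x ^ i) * odd_esym x (Suc r) k
    = x ^ (2 * k) * (\<Sum>i<2 * m + 2 - 2 * k. x ^ i) * odd_esym x r k
      + (if k = 0 then 0 else x ^ (2 * r + 2 * k) * (\<Sum>i<2 * m + 3 - 2 * k. x ^ i) * odd_esym x r (k - 1))"
proof -
  define G where "G n = (\<Sum>i<n. x ^ i)" for n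
  have G: "(x - 1) * (P * G n * E) = P * (x ^ n - 1) * E" for P E :: 'a and n
    unfolding G_def power_diff_1_eq by (simp add: algebra_simps)
  have "(x - 1) * (x ^ (2 * k) * G (2 * r + 1) * odd_esym x r k
      + x ^ (2 * r + 1) * G (2 * m - 2 * r + 1) * odd_esym x (Suc r) k)
    = (x - 1) * (x ^ (2 * k) * G (2 * m + 2 - 2 * k) * odd_esym x r k
      + (if k = 0 then 0 else x ^ (2 * r + 2 * k) * G (2 * m + 3 - 2 * k) * odd_esym x r (k - 1)))"
    unfolding distrib_left G if_distrib[of "(*) (x - 1)"] mult_zero_right
    by (rule odd_esym_insertion_identity_scaled[OF assms(2,3)])
  with assms(1) show ?thesis
    unfolding G_def by simp
qed

section \<open>Subsets and ranks in finite linear orders\<close>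

lemma sum_subsets_insert:
  assumes "finite A" and "b \<notin> A"
  shows "(\<Sum>S | S \<subseteq> insert b A \<and> card S = Suc k. f S)
    = (\<Sum>S | S \<subseteq> A \<and> card S = Suc k. f S) + (\<Sum>T | T \<subseteq> A \<and> card T = k. f (insert b T))"
proof -
  let ?old = "{S. S \<subseteq> A \<and> card S = Suc k}" and ?new = "{T. T \<subseteq> A \<and> card T = k}"
  have split: "{S. S \<subseteq> insert b A \<and> card S = Suc k} = ?old \<union> insert b ` ?new"
  proof (intro equalityI subsetI)
    fix S assume S: "S \<in> {S. S \<subseteq> insert b A \<and> card S = Suc k}"
    show "S \<in> ?old \<union> insert b ` ?new"
    proof (cases "b \<in> S")
      case True
      then have "S = insert b (S - {b})" and "S - {b} \<in> ?new"
        using S assms(1) by (auto dest: finite_subset)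
      then show ?thesis by blast
    next
      case False
      then show ?thesis using S by auto
    qed
  next
    fix S assume "S \<in> ?old \<union> insert b ` ?new"
    then consider "S \<in> ?old" | T where "T \<in> ?new" "S = insert b T"
      by blast
    then show "S \<in> {S. S \<subseteq> insert b A \<and> card S = Suc k}"
    proof cases
      case 2
      then have "finite T" and "b \<notin> T"
        using assms finite_subset by auto
      with 2 show ?thesis by auto
    qed auto
  qed
  have "inj_on (insert b) ?new"
    using assms(2) by (intro inj_onI) (metis insert_ident subsetD mem_Collect_eq)
  moreover have "?old \<inter> insert b ` ?new = {}"
    using assms(2) by auto
  ultimately show ?thesis
    unfolding split using assms(1) by (simp add: sum.union_disjoint sum.reindex)
qed

lemma sum_card_greater:
  fixes D :: "'a::linorder set"
  assumes "finite D"
  shows "(\<Sum>s\<in>D. g (card {i\<in>D. s < i})) = (\<Sum>j<card D. g j)"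
  using assms
proof (induction D arbitrary: g rule: finite_linorder_max_induct)
  case empty
  then show ?case by simp
next
  case (insert b A)
  have b: "b \<notin> A"
    using insert.hyps by auto
  have above: "card {i\<in>insert b A. s < i} = Suc (card {i\<in>A. s < i})" if "s \<in> A" for s
  proof -
    have "{i\<in>insert b A. s < i} = insert b {i\<in>A. s < i}"
      using insert.hyps that by auto
    then show ?thesis
      using insert.hyps(1) b by simp
  qed
  have top: "{i\<in>insert b A. b < i} = {}"
    using insert.hyps by auto
  have "(\<Sum>s\<in>insert b A. g (card {i\<in>insert b A. s < i}))
      = g (card {i\<in>insert b A. b < i}) + (\<Sum>s\<in>A. g (card {i\<in>insert b A. s < i}))"
    using insert.hyps(1) b by (rule sum.insert)
  also have "\<dots> = g 0 + (\<Sum>s\<in>A. g (Suc (card {i\<in>A. s < i})))"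
    unfolding top by (simp add: above del: insert_iff)
  also have "\<dots> = (\<Sum>j<card (insert b A). g j)"
    using insert.hyps(1) b insert.IH[of "\<lambda>j. g (Suc j)"]
    by (simp add: sum.lessThan_Suc_shift del: sum.lessThan_Suc)
  finally show ?case .
qed

lemma sum_complement_card_greater:
  fixes D :: "nat set"
  assumes "D \<subseteq> {..<N}"
  shows "(\<Sum>s\<in>{..<N} - D. g (s + card {i\<in>D. s < i})) = (\<Sum>j\<in>{card D..<N}. g j)"
  using assms
proof (induction N arbitrary: D g)
  case 0
  then show ?case by simp
next
  case (Suc N)
  show ?case
  proof (cases "N \<in> D")
    case True
    define D' where "D' = D - {N}"
    have D': "D' \<subseteq> {..<N}" "finite D'" "D = insert N D'" "N \<notin> D'"
      using Suc.prems True finite_subset unfolding D'_def by (auto simp: less_Suc_eq)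
    have "card {i\<in>D. s < i} = Suc (card {i\<in>D'. s < i})" if "s \<in> {..<N} - D'" for s
    proof -
      have "{i\<in>D. s < i} = insert N {i\<in>D'. s < i}"
        using D' that by auto
      then show ?thesis
        using D' by simp
    qed
    moreover have "{..<Suc N} - D = {..<N} - D'"
      using D' by auto
    ultimately have "(\<Sum>s\<in>{..<Suc N} - D. g (s + card {i\<in>D. s < i}))
        = (\<Sum>s\<in>{..<N} - D'. g (Suc (s + card {i\<in>D'. s < i})))"
      by simp
    also have "\<dots> = (\<Sum>j\<in>{card D'..<N}. g (Suc j))"
      using Suc.IH[OF D'(1), of "\<lambda>j. g (Suc j)"] by simp
    also have "\<dots> = (\<Sum>j\<in>{Suc (card D')..<Suc N}. g j)"
      by (rule sum.shift_bounds_Suc_ivl[symmetric])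
    finally show ?thesis
      using D' by simp
  next
    case False
    then have D: "D \<subseteq> {..<N}"
      using Suc.prems by (auto simp: less_Suc_eq)
    have "card D \<le> N"
      using card_mono[OF _ D] by simp
    have "(\<Sum>s\<in>{..<Suc N} - D. g (s + card {i\<in>D. s < i}))
        = g N + (\<Sum>s\<in>{..<N} - D. g (s + card {i\<in>D. s < i}))"
    proof -
      have split: "{..<Suc N} - D = insert N ({..<N} - D)" and top: "{i\<in>D. N < i} = {}"
        using False D by auto
      show ?thesis
        unfolding split by (simp add: top)
    qed
    also have "\<dots> = (\<Sum>j\<in>{card D..<Suc N}. g j)"
      using Suc.IH[OF D] \<open>card D \<le> N\<close> by (simp add: sum.atLeastLessThan_Suc add.commute)
    finally show ?thesis .
  qed
qed

lemma card_ge_eq_Suc_card_greater: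
  fixes D :: "'a::linorder set"
  assumes "finite D" and "j \<in> D"
  shows "card {i\<in>D. j \<le> i} = Suc (card {i\<in>D. j < i})"
proof -
  have "{i\<in>D. j \<le> i} = insert j {i\<in>D. j < i}"
    using assms(2) by auto
  then show ?thesis
    using assms(1) by simp
qed

lemma card_ge_add_card_less:
  fixes D :: "'a::linorder set"
  assumes "finite D"
  shows "card {i\<in>D. j \<le> i} + card {i\<in>D. i < j} = card D"
proof -
  have "card ({i\<in>D. j \<le> i} \<union> {i\<in>D. i < j}) = card {i\<in>D. j \<le> i} + card {i\<in>D. i < j}"
    by (rule card_Un_disjoint) (use assms in auto)
  moreover have "{i\<in>D. j \<le> i} \<union> {i\<in>D. i < j} = D"
    by auto
  ultimately show ?thesis
    by simp
qed

lemma sum_odd_card_ge: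
  fixes D :: "'a::linorder set"
  assumes "finite D"
  shows "(\<Sum>j\<in>D. 2 * card {i\<in>D. j \<le> i} - 1) = (card D)\<^sup>2"
proof -
  have "(\<Sum>j\<in>D. 2 * card {i\<in>D. j \<le> i} - 1) = (\<Sum>j\<in>D. 2 * card {i\<in>D. j < i} + 1)"
    using card_ge_eq_Suc_card_greater[OF assms] by (intro sum.cong) simp_all
  also have "\<dots> = (\<Sum>t<card D. 2 * t + 1)"
    by (rule sum_card_greater[OF assms])
  also have "\<dots> = (card D)\<^sup>2"
  proof -
    have "(\<Sum>t<n. 2 * t + 1) = n\<^sup>2" for n :: nat
      by (induction n) (simp_all add: power2_eq_square)
    then show ?thesis .
  qed
  finally show ?thesis .
qed

lemma card_le_add_card_greater:
  fixes D :: "nat set"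
  assumes "finite D" and "s \<notin> D"
  shows "card D \<le> s + card {i\<in>D. s < i}"
proof -
  have "D \<subseteq> {i\<in>D. i < s} \<union> {i\<in>D. s < i}"
  proof
    fix i assume "i \<in> D"
    with assms(2) have "i \<noteq> s"
      by blast
    with \<open>i \<in> D\<close> show "i \<in> {i\<in>D. i < s} \<union> {i\<in>D. s < i}"
      by auto
  qed
  then have "card D \<le> card ({i\<in>D. i < s} \<union> {i\<in>D. s < i})"
    by (rule card_mono[rotated]) (use assms(1) in auto)
  also have "\<dots> \<le> card {i\<in>D. i < s} + card {i\<in>D. s < i}"
    by (rule card_Un_le)
  also have "card {i\<in>D. i < s} \<le> s"
    using card_mono[of "{..<s}" "{i\<in>D. i < s}"] by auto
  finally show ?thesis
    by simp
qed

lemma sum_subsets_odd_esym: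
  fixes D :: "'b::linorder set" and x :: "'a::comm_ring_1"
  assumes "finite D"
  shows "(\<Sum>S | S \<subseteq> D \<and> card S = k. x ^ (\<Sum>j\<in>S. 2 * card {i\<in>D. i < j} + 1))
    = odd_esym x (card D) k"
  using assms
proof (induction D arbitrary: k rule: finite_linorder_max_induct)
  case empty
  then show ?case
    by (cases k) (simp_all add: Collect_conv_if)
next
  case (insert b A)
  have b: "b \<notin> A"
    using insert.hyps by auto
  have rank: "{i\<in>insert b A. i < j} = {i\<in>A. i < j}" if "j \<in> A" for j
    using insert.hyps that by auto
  have "{i\<in>insert b A. i < b} = A"
    using insert.hyps by auto
  show ?case
  proof (cases k)
    case 0
    have "{S. S \<subseteq> insert b A \<and> card S = 0} = {{}}"
      using insert.hyps by (auto dest: finite_subset)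
    then show ?thesis
      using 0 by simp
  next
    case (Suc k')
    let ?e = "\<lambda>S. x ^ (\<Sum>j\<in>S. 2 * card {i\<in>A. i < j} + 1)"
    have same_rank: "(\<Sum>j\<in>S. 2 * card {i\<in>insert b A. i < j} + 1) = (\<Sum>j\<in>S. 2 * card {i\<in>A. i < j} + 1)"
      if "S \<subseteq> A" for S
      using that by (intro sum.cong refl) (simp add: rank subset_iff del: insert_iff)
    have top_rank: "(\<Sum>j\<in>insert b T. 2 * card {i\<in>insert b A. i < j} + 1)
        = (2 * card A + 1) + (\<Sum>j\<in>T. 2 * card {i\<in>A. i < j} + 1)" if "T \<subseteq> A" for T
    proof -
      have "finite T" and "b \<notin> T"
        using that insert.hyps(1) b finite_subset by auto
      then show ?thesis
        using same_rank[OF that] \<open>{i\<in>insert b A. i < b} = A\<close> by (simp del: insert_iff)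
    qed
    have old: "(\<Sum>S | S \<subseteq> A \<and> card S = Suc k'. x ^ (\<Sum>j\<in>S. 2 * card {i\<in>insert b A. i < j} + 1))
        = (\<Sum>S | S \<subseteq> A \<and> card S = Suc k'. ?e S)"
      by (rule sum.cong[OF refl]) (simp only: mem_Collect_eq same_rank)
    have new: "(\<Sum>T | T \<subseteq> A \<and> card T = k'. x ^ (\<Sum>j\<in>insert b T. 2 * card {i\<in>insert b A. i < j} + 1))
        = (\<Sum>T | T \<subseteq> A \<and> card T = k'. x ^ (2 * card A + 1) * ?e T)"
      by (rule sum.cong[OF refl]) (simp only: mem_Collect_eq top_rank power_add)
    have "(\<Sum>S | S \<subseteq> insert b A \<and> card S = k. x ^ (\<Sum>j\<in>S. 2 * card {i\<in>insert b A. i < j} + 1))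
        = (\<Sum>S | S \<subseteq> A \<and> card S = Suc k'. ?e S) + (\<Sum>T | T \<subseteq> A \<and> card T = k'. x ^ (2 * card A + 1) * ?e T)"
      unfolding Suc sum_subsets_insert[OF insert.hyps(1) b] old new ..
    also have "\<dots> = odd_esym x (card A) (Suc k') + x ^ (2 * card A + 1) * odd_esym x (card A) k'"
      by (simp only: insert.IH flip: sum_distrib_left)
    finally show ?thesis
      using b insert.hyps(1) Suc by simp
  qed
qed

section \<open>Descents and flag major index of signed words\<close>

definition insert_at :: "nat \<Rightarrow> 'a \<Rightarrow> 'a list \<Rightarrow> 'a list" where
  "insert_at s e xs = take s xs @ e # drop s xs"

lemma length_insert_at [simp]: "s \<le> length xs \<Longrightarrow> length (insert_at s e xs) = Suc (length xs)"
  unfolding insert_at_def by simp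

lemma map_insert_at: "map f (insert_at s e xs) = insert_at s (f e) (map f xs)"
  unfolding insert_at_def by (simp add: take_map drop_map)

lemma set_insert_at: "set (insert_at s e xs) = insert e (set xs)"
  unfolding insert_at_def by (metis Un_insert_right append_take_drop_id set_append list.set(2))

lemma distinct_insert_at: "distinct (insert_at s e xs) \<longleftrightarrow> distinct xs \<and> e \<notin> set xs"
proof -
  have "distinct (A @ e # B) \<longleftrightarrow> distinct (A @ B) \<and> e \<notin> set (A @ B)" for A B :: "'a list"
    by auto
  then show ?thesis
    unfolding insert_at_def by (simp only: append_take_drop_id)
qed

lemma nth_insert_at:
  assumes "s \<le> length xs" and "j \<le> length xs"
  shows "insert_at s e xs ! j = (if j < s then xs ! j else if j = s then e else xs ! (j - 1))"
  using assms unfolding insert_at_def by (auto simp: nth_append min_def)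

lemma take_drop_insert_at:
  assumes "s \<le> length xs"
  shows "take s (insert_at s e xs) @ drop (Suc s) (insert_at s e xs) = xs"
  using assms unfolding insert_at_def by simp

definition descents :: "int list \<Rightarrow> nat set" where
  "descents xs = {i. i < length xs \<and> (0 # xs) ! Suc i < (0 # xs) ! i}"

definition neg_count :: "int list \<Rightarrow> nat" where
  "neg_count xs = length (filter (\<lambda>x. x < 0) xs)"

definition fmaj :: "int list \<Rightarrow> nat" where
  "fmaj xs = 2 * (\<Sum>i\<in>descents xs. i) + neg_count xs"

lemma descents_subset: "descents xs \<subseteq> {..<length xs}"
  unfolding descents_def by auto

lemma finite_descents [simp]: "finite (descents xs)"
  using descents_subset finite_subset by blast

lemma neg_count_insert_at: "neg_count (insert_at s e xs) = neg_count xs + (if e < 0 then 1 else 0)"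
proof -
  have "length (filter (\<lambda>x. x < 0) (take s xs)) + length (filter (\<lambda>x. x < 0) (drop s xs))
      = length (filter (\<lambda>x. x < 0) xs)"
    by (metis append_take_drop_id filter_append length_append)
  then show ?thesis
    unfolding neg_count_def insert_at_def by simp
qed

lemma descents_insert_at:
  assumes s: "s \<le> length xs" and e: "e \<noteq> 0" and dominant: "\<forall>x\<in>set xs. \<bar>x\<bar> < \<bar>e\<bar>"
  shows "descents (insert_at s e xs) = {i\<in>descents xs. i < s} \<union> Suc ` {i\<in>descents xs. s < i}
    \<union> (if 0 < e then (if s < length xs then {Suc s} else {}) else {s})"
proof -
  let ?w = "0 # xs" and ?v = "0 # insert_at s e xs"
  have w_small: "\<bar>?w ! j\<bar> < \<bar>e\<bar>" if "j \<le> length xs" for j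
    using that e dominant by (cases j) auto
  have v: "?v ! j = (if j \<le> s then ?w ! j else if j = Suc s then e else ?w ! (j - 1))"
    if "j \<le> Suc (length xs)" for j
    using that s by (cases j) (auto simp: nth_insert_at)
  show ?thesis
  proof (intro set_eqI)
    fix i
    consider "i < s" | "i = s" | "i = Suc s" | "Suc s < i"
      by linarith
    then show "i \<in> descents (insert_at s e xs) \<longleftrightarrow> i \<in> {i\<in>descents xs. i < s} \<union> Suc ` {i\<in>descents xs. s < i}
      \<union> (if 0 < e then (if s < length xs then {Suc s} else {}) else {s})"
    proof cases
      case 1
      then show ?thesis
        using s v[of i] v[of "Suc i"] unfolding descents_def by auto
    next
      case 2
      then show ?thesis
        using s v[of s] v[of "Suc s"] w_small[of s] unfolding descents_def by auto
    next
      case 3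
      then show ?thesis
        using s v[of "Suc s"] v[of "Suc (Suc s)"] w_small[of "Suc s"] unfolding descents_def by auto
    next
      case 4
      then obtain i' where "i = Suc i'" and "s < i'"
        by (cases i) auto
      then show ?thesis
        using s v[of i] v[of "Suc i"] unfolding descents_def by auto
    qed
  qed
qed

lemma remove_shift_above:
  fixes D :: "nat set" and s :: nat
  assumes "finite D"
  defines "D' \<equiv> {i\<in>D. i < s} \<union> Suc ` {i\<in>D. s < i}"
  shows card_remove_shift_above: "card D' + (if s \<in> D then 1 else 0) = card D"
    and sum_remove_shift_above: "(\<Sum>i\<in>D'. i) + (if s \<in> D then s else 0) = (\<Sum>i\<in>D. i) + card {i\<in>D. s < i}"
proof -
  let ?L = "{i\<in>D. i < s}" and ?R = "{i\<in>D. s < i}"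
  have fin: "finite ?L" "finite ?R" "finite (D \<inter> {s})"
    using assms(1) by auto
  have D: "D = ?L \<union> ?R \<union> (D \<inter> {s})"
    by auto
  have disj: "?L \<inter> Suc ` ?R = {}" "?L \<inter> ?R = {}" "(?L \<union> ?R) \<inter> (D \<inter> {s}) = {}"
    by auto
  have "card D = card ?L + card ?R + card (D \<inter> {s})"
    by (subst D) (simp add: card_Un_disjoint fin disj)
  then show "card D' + (if s \<in> D then 1 else 0) = card D"
    unfolding D'_def using fin disj by (simp add: card_Un_disjoint card_image)
  have "(\<Sum>i\<in>D. i) = (\<Sum>i\<in>?L. i) + (\<Sum>i\<in>?R. i) + (\<Sum>i\<in>D \<inter> {s}. i)"
    by (subst D) (simp add: sum.union_disjoint fin disj)
  moreover have "(\<Sum>i\<in>Suc ` ?R. i) = (\<Sum>i\<in>?R. i) + card ?R"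
    using sum_Suc[of "\<lambda>i. i" ?R] by (simp add: sum.reindex)
  ultimately show "(\<Sum>i\<in>D'. i) + (if s \<in> D then s else 0) = (\<Sum>i\<in>D. i) + card ?R"
    unfolding D'_def using fin disj by (simp add: sum.union_disjoint)
qed

lemma insert_at_end_positive:
  assumes "0 < e" and "\<forall>x\<in>set xs. \<bar>x\<bar> < \<bar>e\<bar>"
  shows "descents (insert_at (length xs) e xs) = descents xs"
    and "fmaj (insert_at (length xs) e xs) = fmaj xs"
proof -
  have below: "{i\<in>descents xs. i < length xs} = descents xs"
    and above: "{i\<in>descents xs. length xs < i} = {}"
    using descents_subset[of xs] by auto
  show des: "descents (insert_at (length xs) e xs) = descents xs"
    using descents_insert_at[of "length xs" xs e] assms unfolding below above by simp
  show "fmaj (insert_at (length xs) e xs) = fmaj xs"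
    unfolding fmaj_def des neg_count_insert_at using assms(1) by simp
qed

text \<open>The descent at \<open>s\<close>, if any, is destroyed; the new letter creates a descent at \<open>s\<close>
  if it is negative and at \<open>s + 1\<close> if it is positive.\<close>
lemma insert_at_new_descent:
  assumes s: "s \<le> length xs" and e: "e \<noteq> 0" and dominant: "\<forall>x\<in>set xs. \<bar>x\<bar> < \<bar>e\<bar>"
    and not_end: "\<not> (0 < e \<and> s = length xs)"
  defines "D \<equiv> descents xs"
  shows "card (descents (insert_at s e xs)) + (if s \<in> D then 1 else 0) = Suc (card D)"
    and "fmaj (insert_at s e xs) + (if s \<in> D then 2 * s else 0)
      = fmaj xs + 2 * (s + card {i\<in>D. s < i}) + (if 0 < e then 2 else 1)"
proof -
  define t where "t = (if 0 < e then Suc s else s)"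
  let ?D' = "{i\<in>D. i < s} \<union> Suc ` {i\<in>D. s < i}"
  have des: "descents (insert_at s e xs) = insert t ?D'"
    using descents_insert_at[OF s e dominant] not_end s unfolding D_def t_def by auto
  have t: "t \<notin> ?D'"
    unfolding t_def by auto
  have finD: "finite D" and fin: "finite ?D'"
    unfolding D_def by simp_all
  show "card (descents (insert_at s e xs)) + (if s \<in> D then 1 else 0) = Suc (card D)"
    using card_remove_shift_above[OF finD, of s] t fin unfolding des by simp
  have "fmaj (insert_at s e xs) = 2 * (t + (\<Sum>i\<in>?D'. i)) + neg_count xs + (if e < 0 then 1 else 0)"
    unfolding fmaj_def des neg_count_insert_at using t fin by simp
  then show "fmaj (insert_at s e xs) + (if s \<in> D then 2 * s else 0)
      = fmaj xs + 2 * (s + card {i\<in>D. s < i}) + (if 0 < e then 2 else 1)"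
    using sum_remove_shift_above[OF finD, of s] e unfolding fmaj_def D_def[symmetric] t_def
    by (cases "s \<in> D"; cases "0 < e") auto
qed

section \<open>Windows of signed permutations\<close>

definition signed_windows :: "nat \<Rightarrow> int list set" where
  "signed_windows m = {xs. length xs = m \<and> distinct (map abs xs) \<and> set (map abs xs) = {1..int m}}"

lemma signed_windows_length: "xs \<in> signed_windows m \<Longrightarrow> length xs = m"
  unfolding signed_windows_def by simp

lemma descents_signed_window_subset: "xs \<in> signed_windows m \<Longrightarrow> descents xs \<subseteq> {..<m}"
  using descents_subset signed_windows_length by blast

lemma signed_windows_abs: "xs \<in> signed_windows m \<Longrightarrow> x \<in> set xs \<Longrightarrow> 1 \<le> \<bar>x\<bar> \<and> \<bar>x\<bar> \<le> int m"
  unfolding signed_windows_def by fastforce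

lemma finite_signed_windows: "finite (signed_windows m)"
proof (rule finite_subset)
  show "signed_windows m \<subseteq> {xs. set xs \<subseteq> {-int m..int m} \<and> length xs = m}"
    using signed_windows_abs signed_windows_length by (fastforce simp: abs_le_iff)
qed (rule finite_lists_length_eq, simp)

lemma insert_at_in_signed_windows:
  assumes xs: "xs \<in> signed_windows m" and "s \<le> m" and "\<bar>e\<bar> = int (Suc m)"
  shows "insert_at s e xs \<in> signed_windows (Suc m)"
proof -
  have "set (map abs xs) = {1..int m}" and "distinct (map abs xs)"
    using xs unfolding signed_windows_def by auto
  moreover have "insert (int (Suc m)) {1..int m} = {1..int (Suc m)}"
    by auto
  ultimately show ?thesis
    using assms signed_windows_length[OF xs]
    unfolding signed_windows_def by (simp add: map_insert_at set_insert_at distinct_insert_at)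
qed

lemma signed_windows_SucE:
  assumes ys: "ys \<in> signed_windows (Suc m)"
  obtains xs s e where "xs \<in> signed_windows m" "s \<le> m" "\<bar>e\<bar> = int (Suc m)" "ys = insert_at s e xs"
proof -
  have len: "length ys = Suc m" and ys_set: "set (map abs ys) = {1..int (Suc m)}"
    and ys_dist: "distinct (map abs ys)"
    using ys unfolding signed_windows_def by auto
  then have "int (Suc m) \<in> set (map abs ys)"
    by simp
  then obtain s where s: "s < Suc m" and "\<bar>ys ! s\<bar> = int (Suc m)"
    using len by (auto simp: in_set_conv_nth)
  define e where "e = ys ! s"
  have e: "\<bar>e\<bar> = int (Suc m)"
    unfolding e_def by fact
  define xs where "xs = take s ys @ drop (Suc s) ys"
  have xs_len: "length xs = m"
    using s len unfolding xs_def by simp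
  have ys_eq: "ys = insert_at s e xs"
    using s len unfolding xs_def e_def insert_at_def by (simp add: id_take_nth_drop min_def)
  have dist: "distinct (map abs xs)" and new: "\<bar>e\<bar> \<notin> set (map abs xs)"
    using ys_dist unfolding ys_eq map_insert_at distinct_insert_at by simp_all
  have "insert (int (Suc m)) (set (map abs xs)) = {1..int (Suc m)}"
    using ys_set e unfolding ys_eq map_insert_at set_insert_at by simp
  then have "set (map abs xs) = {1..int (Suc m)} - {int (Suc m)}"
    using new e by (metis Diff_insert_absorb)
  also have "\<dots> = {1..int m}"
    by auto
  finally have "xs \<in> signed_windows m"
    unfolding signed_windows_def using dist xs_len by simp
  with s e ys_eq show ?thesis
    by (intro that) simp_all
qed

lemma abs_nth_insert_at_signed_window:
  assumes xs: "xs \<in> signed_windows m" and s: "s \<le> m" and e: "\<bar>e\<bar> = int (Suc m)" and j: "j \<le> m"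
  shows "\<bar>insert_at s e xs ! j\<bar> = int (Suc m) \<longleftrightarrow> j = s"
proof -
  have len: "length xs = m"
    using xs by (rule signed_windows_length)
  have bound: "\<bar>xs ! i\<bar> \<le> int m" if "i < m" for i
    using signed_windows_abs[OF xs nth_mem] that len by simp
  consider "j < s" | "j = s" | "s < j"
    by linarith
  then show ?thesis
  proof cases
    case 1
    then show ?thesis
      using s e len bound[of j] by (simp add: nth_insert_at)
  next
    case 3
    then have "j - 1 < m"
      using j by linarith
    then show ?thesis
      using 3 j e len bound[of "j - 1"] by (simp add: nth_insert_at)
  qed (use s e len in \<open>simp add: nth_insert_at\<close>)
qed

lemma insert_at_signed_windows_inj:
  assumes xs: "xs \<in> signed_windows m" and xs': "xs' \<in> signed_windows m"
    and s: "s \<le> m" and s': "s' \<le> m" and e: "\<bar>e\<bar> = int (Suc m)" and e': "\<bar>e'\<bar> = int (Suc m)"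
    and eq: "insert_at s e xs = insert_at s' e' xs'"
  shows "xs = xs' \<and> s = s' \<and> e = e'"
proof -
  have len: "length xs = m" "length xs' = m"
    using xs xs' by (simp_all add: signed_windows_length)
  have "\<bar>insert_at s' e' xs' ! s\<bar> = int (Suc m)"
    using eq abs_nth_insert_at_signed_window[OF xs s e s] by simp
  then have "s = s'"
    using abs_nth_insert_at_signed_window[OF xs' s' e' s] by simp
  moreover have "e = e'"
    using eq len s s' nth_insert_at[of s xs s e] nth_insert_at[of s' xs' s' e'] \<open>s = s'\<close> by simp
  moreover have "xs = xs'"
    using eq len s s' take_drop_insert_at[of s xs e] take_drop_insert_at[of s' xs' e'] \<open>s = s'\<close> by simp
  ultimately show ?thesis
    by simp
qed

lemma bij_betw_insert_at_signed_windows: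
  "bij_betw (\<lambda>(xs, s, e). insert_at s e xs)
     (signed_windows m \<times> {..m} \<times> {int (Suc m), - int (Suc m)}) (signed_windows (Suc m))"
  (is "bij_betw ?f ?A _")
proof (rule bij_betwI')
  fix p p' assume p: "p \<in> ?A" and p': "p' \<in> ?A"
  obtain xs s e where p_def: "p = (xs, s, e)"
    by (cases p)
  obtain xs' s' e' where p'_def: "p' = (xs', s', e')"
    by (cases p')
  have "xs \<in> signed_windows m" "xs' \<in> signed_windows m" "s \<le> m" "s' \<le> m"
    "\<bar>e\<bar> = int (Suc m)" "\<bar>e'\<bar> = int (Suc m)"
    using p p' unfolding p_def p'_def by auto
  from insert_at_signed_windows_inj[OF this] show "(?f p = ?f p') = (p = p')"
    unfolding p_def p'_def by auto
next
  fix p assume "p \<in> ?A"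
  then show "?f p \<in> signed_windows (Suc m)"
    by (auto intro: insert_at_in_signed_windows)
next
  fix ys assume "ys \<in> signed_windows (Suc m)"
  then obtain xs s e where "xs \<in> signed_windows m" "s \<le> m" "\<bar>e\<bar> = int (Suc m)" "ys = insert_at s e xs"
    by (rule signed_windows_SucE)
  then show "\<exists>p\<in>?A. ys = ?f p"
    by (intro bexI[of _ "(xs, s, e)"]) auto
qed

lemma sum_signed_windows_Suc:
  "(\<Sum>ys\<in>signed_windows (Suc m). h ys)
    = (\<Sum>xs\<in>signed_windows m. \<Sum>s\<le>m. h (insert_at s (int (Suc m)) xs) + h (insert_at s (- int (Suc m)) xs))"
proof -
  have "(\<Sum>ys\<in>signed_windows (Suc m). h ys)
      = (\<Sum>(xs, s, e)\<in>signed_windows m \<times> {..m} \<times> {int (Suc m), - int (Suc m)}. h (insert_at s e xs))"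
    using sum.reindex_bij_betw[OF bij_betw_insert_at_signed_windows, of h m]
    by (simp add: case_prod_unfold)
  also have "\<dots> = (\<Sum>xs\<in>signed_windows m. \<Sum>(s, e)\<in>{..m} \<times> {int (Suc m), - int (Suc m)}. h (insert_at s e xs))"
    by (rule sum.cartesian_product[symmetric])
  also have "\<dots> = (\<Sum>xs\<in>signed_windows m. \<Sum>s\<le>m. \<Sum>e\<in>{int (Suc m), - int (Suc m)}. h (insert_at s e xs))"
    by (simp only: sum.cartesian_product)
  finally show ?thesis
    by simp
qed

text \<open>Marking all \<open>r\<close> descents lowers \<open>fmaj\<close> by \<open>r\<^sup>2\<close>, so this gives \<open>fmaj((\<pi>, S)) \<ge> 0\<close>, which
  \<^const>\<open>Bfmaj\<close> tacitly relies on when it truncates exponents with \<^const>\<open>nat\<close>.\<close>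
lemma card_descents_squared_le_fmaj:
  "xs \<in> signed_windows m \<Longrightarrow> (card (descents xs))\<^sup>2 \<le> fmaj xs"
proof (induction m arbitrary: xs)
  case 0
  then show ?case
    by (simp add: signed_windows_def descents_def)
next
  case (Suc m)
  obtain xs' s e where xs': "xs' \<in> signed_windows m" and s: "s \<le> m" and e: "\<bar>e\<bar> = int (Suc m)"
    and xs: "xs = insert_at s e xs'"
    using Suc.prems by (rule signed_windows_SucE)
  have len: "length xs' = m"
    using xs' by (rule signed_windows_length)
  have dominant: "\<forall>x\<in>set xs'. \<bar>x\<bar> < \<bar>e\<bar>" and "e \<noteq> 0"
    using signed_windows_abs[OF xs'] e by force+
  let ?D = "descents xs'"
  have IH: "(card ?D)\<^sup>2 \<le> fmaj xs'"
    using xs' by (rule Suc.IH)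
  consider (at_end) "0 < e \<and> s = m" | (at_old) "\<not> (0 < e \<and> s = m)" "s \<in> ?D"
    | (at_new) "\<not> (0 < e \<and> s = m)" "s \<notin> ?D"
    by blast
  then show ?case
  proof cases
    case at_end
    then show ?thesis
      using insert_at_end_positive[of e xs'] dominant IH len xs by simp
  next
    case at_old
    then show ?thesis
      using insert_at_new_descent[of s xs' e] s len dominant \<open>e \<noteq> 0\<close> IH xs by simp
  next
    case at_new
    have few: "card ?D \<le> s + card {i\<in>?D. s < i}"
      using at_new by (intro card_le_add_card_greater) auto
    have card: "card (descents xs) = Suc (card ?D)"
      and fmaj: "fmaj xs' + 2 * (s + card {i\<in>?D. s < i}) + 1 \<le> fmaj xs"
      using insert_at_new_descent[of s xs' e] at_new s len dominant \<open>e \<noteq> 0\<close> xs by auto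
    have "(Suc c)\<^sup>2 \<le> f" if "c\<^sup>2 \<le> f'" "c \<le> t" "f' + 2 * t + 1 \<le> f" for c t f' f :: nat
    proof -
      have "(Suc c)\<^sup>2 = c\<^sup>2 + 2 * c + 1"
        by (simp add: power2_eq_square)
      with that show ?thesis
        by linarith
    qed
    from this[OF IH few fmaj] show ?thesis
      unfolding card .
  qed
qed

definition window :: "nat \<Rightarrow> (int \<Rightarrow> int) \<Rightarrow> int list" where
  "window m \<pi> = map (\<lambda>i. \<pi> (int i)) [1..<Suc m]"

definition perm_of_window :: "nat \<Rightarrow> int list \<Rightarrow> int \<Rightarrow> int" where
  "perm_of_window m xs i = (if i \<in> {-int m..int m} - {0} then sgn i * xs ! (nat \<bar>i\<bar> - 1) else i)"

lemma length_window [simp]: "length (window m \<pi>) = m"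
  unfolding window_def by simp

lemma nth_window: "k < m \<Longrightarrow> window m \<pi> ! k = \<pi> (int (Suc k))"
  unfolding window_def by (simp del: upt_Suc of_nat_Suc)

lemma signed_permsD:
  assumes "\<pi> \<in> signed_perms m"
  shows "bij_betw \<pi> ({-int m..int m} - {0}) ({-int m..int m} - {0})"
    and "i \<in> {-int m..int m} - {0} \<Longrightarrow> \<pi> (-i) = - \<pi> i"
    and "i \<notin> {-int m..int m} - {0} \<Longrightarrow> \<pi> i = i"
  using assms unfolding signed_perms_def by auto

lemma window_in_signed_windows:
  assumes \<pi>: "\<pi> \<in> signed_perms m"
  shows "window m \<pi> \<in> signed_windows m"
proof -
  let ?M = "{-int m..int m} - {0}"
  note bij = signed_permsD(1)[OF \<pi>]
  have abs_window: "map abs (window m \<pi>) = map (\<lambda>i. \<bar>\<pi> (int i)\<bar>) [1..<Suc m]"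
    unfolding window_def by simp
  have range: "\<bar>\<pi> (int i)\<bar> \<in> {1..int m}" if "i \<in> {1..m}" for i
  proof -
    have "\<pi> (int i) \<in> ?M"
      using bij that by (auto dest: bij_betwE)
    then show ?thesis
      by auto
  qed
  have "inj_on (\<lambda>i. \<bar>\<pi> (int i)\<bar>) {1..m}"
  proof (rule inj_onI)
    fix a b assume a: "a \<in> {1..m}" and b: "b \<in> {1..m}" and eq: "\<bar>\<pi> (int a)\<bar> = \<bar>\<pi> (int b)\<bar>"
    then have "\<pi> (int a) = \<pi> (int b) \<or> \<pi> (int a) = \<pi> (- int b)"
      using signed_permsD(2)[OF \<pi>, of "int b"] by (auto simp: abs_eq_iff)
    then have "int a = int b \<or> int a = - int b"
      using bij_betw_imp_inj_on[OF bij] a b by (auto dest: inj_onD)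
    then show "a = b"
      using a b by auto
  qed
  then have dist: "distinct (map abs (window m \<pi>))"
    unfolding abs_window by (simp add: distinct_map atLeastLessThanSuc_atLeastAtMost del: upt_Suc)
  have "set (map abs (window m \<pi>)) \<subseteq> {1..int m}"
    unfolding abs_window using range by (auto simp del: upt_Suc)
  moreover have "card (set (map abs (window m \<pi>))) = card {1..int m}"
    using distinct_card[OF dist] by simp
  ultimately have "set (map abs (window m \<pi>)) = {1..int m}"
    by (simp add: card_subset_eq)
  with dist show ?thesis
    unfolding signed_windows_def by simp
qed

lemma inj_on_perm_of_window:
  assumes xs: "xs \<in> signed_windows m"
  shows "inj_on (perm_of_window m xs) ({-int m..int m} - {0})"
proof (rule inj_onI)
  let ?M = "{-int m..int m} - {0}" and ?f = "perm_of_window m xs"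
  fix i j assume i: "i \<in> ?M" and j: "j \<in> ?M" and eq: "?f i = ?f j"
  have len: "length xs = m" and dist: "distinct (map abs xs)"
    using xs unfolding signed_windows_def by auto
  have idx: "nat \<bar>i\<bar> - 1 < m" "nat \<bar>j\<bar> - 1 < m"
    using i j by auto
  have abs_f: "\<bar>?f l\<bar> = \<bar>xs ! (nat \<bar>l\<bar> - 1)\<bar>" if "l \<in> ?M" for l
    using that unfolding perm_of_window_def by (auto simp: abs_mult abs_sgn_eq)
  have "map abs xs ! (nat \<bar>i\<bar> - 1) = map abs xs ! (nat \<bar>j\<bar> - 1)"
    using eq abs_f[OF i] abs_f[OF j] idx len by simp
  then have "nat (\<bar>i\<bar>) - 1 = nat (\<bar>j\<bar>) - 1"
    using nth_eq_iff_index_eq[OF dist] idx len by simp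
  moreover have "i \<noteq> 0" and "j \<noteq> 0"
    using i j by auto
  ultimately have "\<bar>i\<bar> = \<bar>j\<bar>"
    by arith
  moreover have "sgn i = sgn j"
  proof -
    have "sgn i * xs ! (nat \<bar>i\<bar> - 1) = sgn j * xs ! (nat \<bar>i\<bar> - 1)"
      using eq i j \<open>\<bar>i\<bar> = \<bar>j\<bar>\<close> unfolding perm_of_window_def by simp
    moreover have "xs ! (nat \<bar>i\<bar> - 1) \<noteq> 0"
      using signed_windows_abs[OF xs nth_mem] idx len by fastforce
    ultimately show ?thesis
      by simp
  qed
  ultimately show "i = j"
    by (metis sgn_mult_abs)
qed

lemma perm_of_window_in_signed_perms:
  assumes xs: "xs \<in> signed_windows m"
  shows "perm_of_window m xs \<in> signed_perms m"
proof -
  let ?M = "{-int m..int m} - {0}" and ?f = "perm_of_window m xs"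
  have into: "?f ` ?M \<subseteq> ?M"
  proof
    fix y assume "y \<in> ?f ` ?M"
    then obtain i where i: "i \<in> ?M" and y: "y = ?f i"
      by blast
    then have "nat \<bar>i\<bar> - 1 < length xs"
      using signed_windows_length[OF xs] by auto
    then have "1 \<le> \<bar>xs ! (nat \<bar>i\<bar> - 1)\<bar> \<and> \<bar>xs ! (nat \<bar>i\<bar> - 1)\<bar> \<le> int m"
      using signed_windows_abs[OF xs nth_mem] by blast
    moreover have "\<bar>y\<bar> = \<bar>xs ! (nat \<bar>i\<bar> - 1)\<bar>"
      using i unfolding y perm_of_window_def by (auto simp: abs_mult abs_sgn_eq)
    ultimately have "1 \<le> \<bar>y\<bar>" and "\<bar>y\<bar> \<le> int m"
      by simp_all
    then show "y \<in> ?M"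
      by (auto simp: abs_le_iff)
  qed
  then have "bij_betw ?f ?M ?M"
    using inj_on_perm_of_window[OF xs] by (simp add: bij_betw_def endo_inj_surj)
  moreover have "?f (-i) = - ?f i" if "i \<in> ?M" for i
    using that unfolding perm_of_window_def by auto
  moreover have "?f i = i" if "i \<notin> ?M" for i
    using that unfolding perm_of_window_def by auto
  ultimately show ?thesis
    unfolding signed_perms_def by blast
qed

lemma window_perm_of_window: "xs \<in> signed_windows m \<Longrightarrow> window m (perm_of_window m xs) = xs"
  by (rule nth_equalityI) (simp_all add: nth_window perm_of_window_def signed_windows_length del: of_nat_Suc)

lemma perm_of_window_window:
  assumes \<pi>: "\<pi> \<in> signed_perms m"
  shows "perm_of_window m (window m \<pi>) = \<pi>"
proof
  fix i
  show "perm_of_window m (window m \<pi>) i = \<pi> i"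
  proof (cases "i \<in> {-int m..int m} - {0}")
    case True
    then have "nat \<bar>i\<bar> - 1 < m" and "int (Suc (nat \<bar>i\<bar> - 1)) = \<bar>i\<bar>"
      by auto
    then show ?thesis
      using True signed_permsD(2)[OF \<pi>, of "- i"]
      unfolding perm_of_window_def by (auto simp: nth_window sgn_if abs_if)
  next
    case False
    then show ?thesis
      using signed_permsD(3)[OF \<pi> False] unfolding perm_of_window_def if_not_P[OF False] by simp
  qed
qed

lemma bij_betw_window: "bij_betw (window m) (signed_perms m) (signed_windows m)"
  by (rule bij_betw_byWitness[where f' = "perm_of_window m"])
    (auto simp: perm_of_window_window window_perm_of_window
      window_in_signed_windows perm_of_window_in_signed_perms)

lemma desB_eq_descents_window:
  assumes "\<pi> \<in> signed_perms m"
  shows "desB m \<pi> = descents (window m \<pi>)"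
proof -
  have nth: "(0 # window m \<pi>) ! i = \<pi> (int i)" if "i \<le> m" for i
    using that signed_permsD(3)[OF assms, of 0] by (cases i) (auto simp: nth_window)
  have "i \<in> desB m \<pi> \<longleftrightarrow> i \<in> descents (window m \<pi>)" for i
    using nth[of i] nth[of "Suc i"] unfolding desB_def descents_def by (cases "i < m") auto
  then show ?thesis
    by blast
qed

lemma negB_eq_neg_count_window: "negB m \<pi> = neg_count (window m \<pi>)"
proof -
  have "neg_count (window m \<pi>) = card ({i. \<pi> (int i) < 0} \<inter> set [1..<Suc m])"
    unfolding neg_count_def window_def by (simp add: filter_map comp_def distinct_length_filter)
  also have "{i. \<pi> (int i) < 0} \<inter> set [1..<Suc m] = {i \<in> {1..m}. \<pi> (int i) < 0}"
    by auto
  finally show ?thesis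
    unfolding negB_def by simp
qed

section \<open>Marked descents\<close>

abbreviation q :: "int poly" where
  "q \<equiv> [:0, 1:]"

lemma qint_eq_sum_power: "qint n = (\<Sum>i<n. q ^ i)"
  by (simp add: qint_def monom_altdef)

definition marked_poly :: "nat \<Rightarrow> int list \<Rightarrow> int poly" where
  "marked_poly k xs = (\<Sum>S | S \<subseteq> descents xs \<and> card S = k.
     monom 1 (nat (int (fmaj xs) - (\<Sum>j\<in>S. 2 * int (card {i\<in>descents xs. j \<le> i}) - 1))))"

lemma Bfmaj_eq_sum_marked_poly: "Bfmaj m k = (\<Sum>xs\<in>signed_windows m. marked_poly k xs)"
proof -
  let ?B = "\<lambda>\<pi>. {S. S \<subseteq> desB m \<pi> \<and> card S = k}"
  let ?F = "\<lambda>p. monom (1::int) (nat (fmajBS m p))"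
  have fin_perms: "finite (signed_perms m)"
    using bij_betw_finite[OF bij_betw_window] finite_signed_windows by blast
  have fin_marks: "finite (?B \<pi>)" for \<pi>
  proof -
    have "desB m \<pi> \<subseteq> {0..<m}"
      unfolding desB_def by auto
    then have "finite (Pow (desB m \<pi>))"
      by (simp add: finite_subset)
    then show ?thesis
      by (rule rev_finite_subset) auto
  qed
  have "Bfmaj m k = (\<Sum>\<pi>\<in>signed_perms m. \<Sum>S\<in>?B \<pi>. ?F (\<pi>, S))"
    unfolding Bfmaj_def Bgt_def using fin_perms fin_marks
    by (simp add: sum.Sigma Sigma_def Collect_case_prod_Sigma del: Sigma_cong)
  also have "\<dots> = (\<Sum>\<pi>\<in>signed_perms m. marked_poly k (window m \<pi>))"
  proof (rule sum.cong[OF refl])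
    fix \<pi> assume \<pi>: "\<pi> \<in> signed_perms m"
    have des: "desB m \<pi> = descents (window m \<pi>)"
      using \<pi> by (rule desB_eq_descents_window)
    have "fmajB m \<pi> = int (fmaj (window m \<pi>))"
      unfolding fmajB_def fmaj_def des negB_eq_neg_count_window by (simp add: sum_distrib_left)
    moreover have "descents (window m \<pi>) \<inter> {j..m - 1} = {i\<in>descents (window m \<pi>). j \<le> i}" for j
      using descents_subset[of "window m \<pi>"] by auto
    ultimately show "(\<Sum>S\<in>?B \<pi>. ?F (\<pi>, S)) = marked_poly k (window m \<pi>)"
      unfolding marked_poly_def fmajBS_def by (simp add: des)
  qed
  also have "\<dots> = (\<Sum>xs\<in>signed_windows m. marked_poly k xs)"
    by (rule sum.reindex_bij_betw[OF bij_betw_window])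
  finally show ?thesis .
qed

text \<open>The factor \<open>q\<^bsup>2kr\<^esup>\<close> keeps all exponents natural.\<close>
lemma marked_poly_odd_esym:
  assumes fmaj_ge: "(card (descents xs))\<^sup>2 \<le> fmaj xs"
  defines "r \<equiv> card (descents xs)"
  shows "q ^ (2 * k * r) * marked_poly k xs = q ^ fmaj xs * odd_esym q r k"
proof -
  define D where "D = descents xs"
  define f where "f = fmaj xs"
  have fin: "finite D"
    unfolding D_def by simp
  have split: "card {i\<in>D. j \<le> i} = Suc (card {i\<in>D. j < i})" if "j \<in> D" for j
    using card_ge_eq_Suc_card_greater[OF fin that] .
  have complement: "card {i\<in>D. j \<le> i} + card {i\<in>D. i < j} = r" for j
    unfolding r_def D_def[symmetric] by (rule card_ge_add_card_less[OF fin])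
  have total: "(\<Sum>j\<in>D. 2 * card {i\<in>D. j \<le> i} - 1) = r\<^sup>2"
    unfolding r_def D_def[symmetric] by (rule sum_odd_card_ge[OF fin])
  have summand: "q ^ (2 * k * r) * monom 1 (nat (int f - (\<Sum>j\<in>S. 2 * int (card {i\<in>D. j \<le> i}) - 1)))
      = q ^ f * q ^ (\<Sum>j\<in>S. 2 * card {i\<in>D. i < j} + 1)" if S: "S \<subseteq> D" "card S = k" for S
  proof -
    define a where "a = (\<Sum>j\<in>S. 2 * card {i\<in>D. j \<le> i} - 1)"
    have pos: "1 \<le> card {i\<in>D. j \<le> i}" if "j \<in> S" for j
      using split S that by auto
    have "a \<le> (\<Sum>j\<in>D. 2 * card {i\<in>D. j \<le> i} - 1)"
      unfolding a_def using S fin by (intro sum_mono2) auto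
    then have a_le: "a \<le> f"
      using total fmaj_ge unfolding f_def r_def D_def by simp
    have "a + (\<Sum>j\<in>S. 2 * card {i\<in>D. i < j} + 1) = (\<Sum>j\<in>S. 2 * r)"
      unfolding a_def sum.distrib[symmetric] using S complement pos by (intro sum.cong) force+
    then have exponent: "2 * k * r + (f - a) = f + (\<Sum>j\<in>S. 2 * card {i\<in>D. i < j} + 1)"
      using S a_le by simp
    have "(\<Sum>j\<in>S. 2 * int (card {i\<in>D. j \<le> i}) - 1) = int a"
      unfolding a_def using pos by (simp add: of_nat_sum of_nat_diff)
    moreover have "nat (int f - int a) = f - a"
      using a_le by simp
    ultimately show ?thesis
      by (simp only: monom_altdef smult_1_left flip: power_add exponent)
  qed
  have "q ^ (2 * k * r) * marked_poly k xs
      = (\<Sum>S | S \<subseteq> D \<and> card S = k. q ^ f * q ^ (\<Sum>j\<in>S. 2 * card {i\<in>D. i < j} + 1))"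
    unfolding marked_poly_def sum_distrib_left D_def[symmetric] f_def[symmetric]
    by (rule sum.cong) (simp_all add: summand)
  also have "\<dots> = q ^ f * odd_esym q r k"
    unfolding r_def D_def[symmetric] by (simp only: sum_subsets_odd_esym[OF fin] flip: sum_distrib_left)
  finally show ?thesis
    unfolding f_def .
qed

lemma scaled_marked_poly_insert_at:
  assumes xs: "xs \<in> signed_windows m" and s: "s \<le> m" and e: "\<bar>e\<bar> = int (Suc m)"
  defines "D \<equiv> descents xs"
  defines "r \<equiv> card D" and "c \<equiv> (if 0 < e then 2 else 1)"
  shows "q ^ (2 * k * Suc r) * marked_poly k (insert_at s e xs) = q ^ fmaj xs *
    (if 0 < e \<and> s = m then q ^ (2 * k) * odd_esym q r k
     else if s \<in> D then q ^ (2 * card {i\<in>D. s < i} + c) * q ^ (2 * k) * odd_esym q r k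
     else q ^ (2 * (s + card {i\<in>D. s < i}) + c) * odd_esym q (Suc r) k)"
proof -
  let ?y = "insert_at s e xs"
  have len: "length xs = m"
    using xs by (rule signed_windows_length)
  have dominant: "\<forall>x\<in>set xs. \<bar>x\<bar> < \<bar>e\<bar>" and "e \<noteq> 0"
    using signed_windows_abs[OF xs] e by force+
  have scaled: "q ^ (2 * k * card (descents ?y)) * marked_poly k ?y = q ^ fmaj ?y * odd_esym q (card (descents ?y)) k"
    using marked_poly_odd_esym card_descents_squared_le_fmaj insert_at_in_signed_windows[OF xs s e] by blast
  have Z: "q ^ (2 * k * Suc r) = q ^ (2 * k) * q ^ (2 * k * r)"
    by (simp add: power_add)
  show ?thesis
  proof (cases "0 < e \<and> s = m")
    case True
    then have "descents ?y = D" and "fmaj ?y = fmaj xs"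
      using insert_at_end_positive[of e xs] dominant len unfolding D_def by simp_all
    then have scaled_xs: "q ^ (2 * k * r) * marked_poly k ?y = q ^ fmaj xs * odd_esym q r k"
      using scaled unfolding r_def by simp
    have "q ^ (2 * k * Suc r) * marked_poly k ?y = q ^ (2 * k) * (q ^ (2 * k * r) * marked_poly k ?y)"
      unfolding Z by (simp only: mult.assoc)
    then show ?thesis
      using True unfolding scaled_xs by (simp add: mult.left_commute)
  next
    case False
    then have not_end: "\<not> (0 < e \<and> s = length xs)"
      using len by simp
    note new = insert_at_new_descent[OF _ \<open>e \<noteq> 0\<close> dominant not_end, folded D_def c_def]
    show ?thesis
    proof (cases "s \<in> D")
      case True
      then have "card (descents ?y) = r" and "fmaj ?y = fmaj xs + (2 * card {i\<in>D. s < i} + c)"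
        using new s len unfolding r_def by auto
      then show ?thesis
        using scaled unfolding Z if_not_P[OF False] if_P[OF True] by (simp add: power_add algebra_simps)
    next
      case notin: False
      then have "card (descents ?y) = Suc r"
        and "fmaj ?y = fmaj xs + (2 * (s + card {i\<in>D. s < i}) + c)"
        using new s len unfolding r_def by auto
      then show ?thesis
        using scaled unfolding if_not_P[OF False] if_not_P[OF notin] by (simp add: power_add algebra_simps)
    qed
  qed
qed

lemma sum_scaled_marked_poly_insert_positive:
  assumes xs: "xs \<in> signed_windows m"
  defines "D \<equiv> descents xs"
  defines "r \<equiv> card D"
  shows "q ^ (2 * k * Suc r) * (\<Sum>s\<le>m. marked_poly k (insert_at s (int (Suc m)) xs))
    = q ^ fmaj xs * (q ^ (2 * k) * odd_esym q r k * (1 + (\<Sum>t<r. q ^ (2 * t + 2)))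
      + (\<Sum>j\<in>{r..<m}. q ^ (2 * j + 2)) * odd_esym q (Suc r) k)"
proof -
  define above where "above s = card {i\<in>D. s < i}" for s
  let ?pos = "\<lambda>s. q ^ (2 * k * Suc r) * marked_poly k (insert_at s (int (Suc m)) xs)"
  note weight = scaled_marked_poly_insert_at[OF xs _, of _ "int (Suc m)" k, folded D_def, folded r_def above_def]
  have D_sub: "D \<subseteq> {..<m}"
    unfolding D_def by (rule descents_signed_window_subset[OF xs])
  then have fin: "finite D"
    by (rule finite_subset) simp
  have "(\<Sum>s\<le>m. ?pos s) = ?pos m + (\<Sum>s\<in>D. ?pos s) + (\<Sum>s\<in>{..<m} - D. ?pos s)"
    using D_sub by (simp add: lessThan_Suc_atMost[symmetric] sum.subset_diff[of D "{..<m}"] algebra_simps)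
  also have "\<dots> = q ^ fmaj xs * (q ^ (2 * k) * odd_esym q r k * (1 + (\<Sum>s\<in>D. q ^ (2 * above s + 2)))
      + (\<Sum>s\<in>{..<m} - D. q ^ (2 * (s + above s) + 2)) * odd_esym q (Suc r) k)"
    using weight[of m] weight D_sub
    by (auto simp: sum_distrib_left sum_distrib_right algebra_simps intro!: sum.cong)
  also have "\<dots> = q ^ fmaj xs * (q ^ (2 * k) * odd_esym q r k * (1 + (\<Sum>t<r. q ^ (2 * t + 2)))
      + (\<Sum>j\<in>{r..<m}. q ^ (2 * j + 2)) * odd_esym q (Suc r) k)"
    using sum_card_greater[OF fin, of "\<lambda>t. q ^ (2 * t + 2)"]
      sum_complement_card_greater[OF D_sub, of "\<lambda>j. q ^ (2 * j + 2)"]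
    unfolding above_def r_def by simp
  finally show ?thesis
    by (simp add: sum_distrib_left)
qed

lemma sum_scaled_marked_poly_insert_negative:
  assumes xs: "xs \<in> signed_windows m"
  defines "D \<equiv> descents xs"
  defines "r \<equiv> card D"
  shows "q ^ (2 * k * Suc r) * (\<Sum>s\<le>m. marked_poly k (insert_at s (- int (Suc m)) xs))
    = q ^ fmaj xs * (q ^ (2 * k) * odd_esym q r k * (\<Sum>t<r. q ^ (2 * t + 1))
      + (\<Sum>j\<in>{r..<Suc m}. q ^ (2 * j + 1)) * odd_esym q (Suc r) k)"
proof -
  define above where "above s = card {i\<in>D. s < i}" for s
  let ?neg = "\<lambda>s. q ^ (2 * k * Suc r) * marked_poly k (insert_at s (- int (Suc m)) xs)"
  note weight = scaled_marked_poly_insert_at[OF xs _, of _ "- int (Suc m)" k, folded D_def, folded r_def above_def]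
  have D_sub: "D \<subseteq> {..<Suc m}"
    using descents_signed_window_subset[OF xs] unfolding D_def by auto
  then have fin: "finite D"
    by (rule finite_subset) simp
  have "(\<Sum>s\<le>m. ?neg s) = (\<Sum>s\<in>{..<Suc m} - D. ?neg s) + (\<Sum>s\<in>D. ?neg s)"
    unfolding lessThan_Suc_atMost[symmetric] by (rule sum.subset_diff[OF D_sub]) simp
  also have "\<dots> = q ^ fmaj xs * (q ^ (2 * k) * odd_esym q r k * (\<Sum>s\<in>D. q ^ (2 * above s + 1))
      + (\<Sum>s\<in>{..<Suc m} - D. q ^ (2 * (s + above s) + 1)) * odd_esym q (Suc r) k)"
    using weight D_sub
    by (auto simp: sum_distrib_left sum_distrib_right algebra_simps intro!: sum.cong)
  also have "\<dots> = q ^ fmaj xs * (q ^ (2 * k) * odd_esym q r k * (\<Sum>t<r. q ^ (2 * t + 1))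
      + (\<Sum>j\<in>{r..<Suc m}. q ^ (2 * j + 1)) * odd_esym q (Suc r) k)"
    using sum_card_greater[OF fin, of "\<lambda>t. q ^ (2 * t + 1)"]
      sum_complement_card_greater[OF D_sub, of "\<lambda>j. q ^ (2 * j + 1)"]
    unfolding above_def r_def by simp
  finally show ?thesis
    by (simp add: sum_distrib_left)
qed

lemma sum_scaled_marked_poly_insertions:
  assumes xs: "xs \<in> signed_windows m"
  defines "r \<equiv> card (descents xs)"
  shows "q ^ (2 * k * Suc r) * (\<Sum>s\<le>m. marked_poly k (insert_at s (int (Suc m)) xs)
      + marked_poly k (insert_at s (- int (Suc m)) xs))
    = q ^ fmaj xs * (q ^ (2 * k) * qint (2 * r + 1) * odd_esym q r k
      + q ^ (2 * r + 1) * qint (2 * m - 2 * r + 1) * odd_esym q (Suc r) k)"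
proof -
  have "r \<le> m"
    using card_mono[OF _ descents_signed_window_subset[OF xs]] unfolding r_def by simp
  have "q ^ (2 * k * Suc r) * (\<Sum>s\<le>m. marked_poly k (insert_at s (int (Suc m)) xs)
      + marked_poly k (insert_at s (- int (Suc m)) xs))
    = q ^ fmaj xs * (q ^ (2 * k) * odd_esym q r k * (1 + (\<Sum>t<r. q ^ (2 * t + 1) + q ^ (2 * t + 2)))
      + ((\<Sum>j\<in>{r..<m}. q ^ (2 * j + 2)) + (\<Sum>j\<in>{r..<Suc m}. q ^ (2 * j + 1))) * odd_esym q (Suc r) k)"
    unfolding sum.distrib distrib_left r_def sum_scaled_marked_poly_insert_positive[OF xs]
      sum_scaled_marked_poly_insert_negative[OF xs]
    by (simp add: algebra_simps)
  also have "\<dots> = q ^ fmaj xs * (q ^ (2 * k) * qint (2 * r + 1) * odd_esym q r k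
      + q ^ (2 * r + 1) * qint (2 * m - 2 * r + 1) * odd_esym q (Suc r) k)"
    unfolding qint_eq_sum_power sum_power_odd_bound sum_power_odd_interval[OF \<open>r \<le> m\<close>]
    by (simp add: algebra_simps)
  finally show ?thesis .
qed

lemma sum_insertions_marked_poly:
  assumes xs: "xs \<in> signed_windows m" and k: "k \<le> Suc m"
  shows "(\<Sum>s\<le>m. marked_poly k (insert_at s (int (Suc m)) xs) + marked_poly k (insert_at s (- int (Suc m)) xs))
    = qint (2 * Suc m - 2 * k) * marked_poly k xs
      + (if k = 0 then 0 else qint (2 * Suc m - 2 * k + 1) * marked_poly (k - 1) xs)"
    (is "?L = ?R")
proof -
  define r where "r = card (descents xs)"
  define Z where "Z = q ^ (2 * k * Suc r)"
  have "r \<le> m"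
    using card_mono[OF _ descents_signed_window_subset[OF xs]] unfolding r_def by simp
  have scaled: "q ^ (2 * j * r) * marked_poly j xs = q ^ fmaj xs * odd_esym q r j" for j
    unfolding r_def by (rule marked_poly_odd_esym[OF card_descents_squared_le_fmaj[OF xs]])
  have Zk: "Z * marked_poly k xs = q ^ fmaj xs * (q ^ (2 * k) * odd_esym q r k)"
    using scaled[of k] unfolding Z_def by (simp add: power_add algebra_simps)
  have Zk1: "Z * marked_poly (k - 1) xs = q ^ fmaj xs * (q ^ (2 * r + 2 * k) * odd_esym q r (k - 1))"
    if "k \<noteq> 0"
  proof -
    have "Z = q ^ (2 * r + 2 * k) * q ^ (2 * (k - 1) * r)"
      using that unfolding Z_def by (cases k) (simp_all add: algebra_simps flip: power_add)
    then show ?thesis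
      using scaled[of "k - 1"] by (simp add: algebra_simps)
  qed
  have "Z * ?R = q ^ fmaj xs * (q ^ (2 * k) * qint (2 * m + 2 - 2 * k) * odd_esym q r k
      + (if k = 0 then 0 else q ^ (2 * r + 2 * k) * qint (2 * m + 3 - 2 * k) * odd_esym q r (k - 1)))"
  proof (cases "k = 0")
    case True
    then show ?thesis
      using Zk by simp
  next
    case False
    have "2 * Suc m - 2 * k + 1 = 2 * m + 3 - 2 * k"
      using k by simp
    moreover have "Z * ?R = qint (2 * Suc m - 2 * k) * (Z * marked_poly k xs)
        + qint (2 * Suc m - 2 * k + 1) * (Z * marked_poly (k - 1) xs)"
      using False by (simp add: algebra_simps)
    ultimately show ?thesis
      unfolding Zk Zk1[OF False] using False by (simp add: algebra_simps)
  qed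
  also have "\<dots> = q ^ fmaj xs * (q ^ (2 * k) * qint (2 * r + 1) * odd_esym q r k
      + q ^ (2 * r + 1) * qint (2 * m - 2 * r + 1) * odd_esym q (Suc r) k)"
    unfolding qint_eq_sum_power
    by (subst odd_esym_insertion_identity) (use k \<open>r \<le> m\<close> in \<open>simp_all add: one_pCons\<close>)
  also have "\<dots> = Z * ?L"
    unfolding Z_def r_def by (rule sum_scaled_marked_poly_insertions[OF xs, symmetric])
  finally show ?thesis
    unfolding Z_def by simp
qed

theorem proposition2p7:
  fixes n k :: nat
  assumes "n \<ge> 1" and "k \<le> n"
  shows "Bfmaj n k = qint (2*n - 2*k) * Bfmaj (n-1) k
           + (if k = 0 then 0 else qint (2*n - 2*k + 1) * Bfmaj (n-1) (k-1))"
proof -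
  obtain m where n: "n = Suc m"
    using assms(1) by (cases n) auto
  have "Bfmaj n k = (\<Sum>xs\<in>signed_windows m. \<Sum>s\<le>m.
      marked_poly k (insert_at s (int (Suc m)) xs) + marked_poly k (insert_at s (- int (Suc m)) xs))"
    unfolding n Bfmaj_eq_sum_marked_poly by (rule sum_signed_windows_Suc)
  also have "\<dots> = (\<Sum>xs\<in>signed_windows m. qint (2 * n - 2 * k) * marked_poly k xs
      + (if k = 0 then 0 else qint (2 * n - 2 * k + 1) * marked_poly (k - 1) xs))"
    using sum_insertions_marked_poly assms(2) unfolding n by simp
  also have "\<dots> = qint (2*n - 2*k) * Bfmaj (n-1) k
      + (if k = 0 then 0 else qint (2*n - 2*k + 1) * Bfmaj (n-1) (k-1))"
    unfolding n Bfmaj_eq_sum_marked_poly by (simp add: sum.distrib sum_distrib_left)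
  finally show ?thesis .
qed

end
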